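(* Let $(\Gamma,M)$ be a connected E-GCM graph which is unital OA-cyclic. If the Coxeter group $W=W(\Gamma,M)$ is infinite, then $U_M\cap(-U_M)=\{0\}$.
   Context: E-GCM $M=(M_{ij})_{i,j\in I_n}$: real, $M_{ii}=2$, $M_{ij}\le0$ ($i\ne j$), $M_{ij}\ne0\iff M_{ji}\ne0$, nonzero $M_{ij}M_{ji}$ either $\ge4$ or $=4\cos^2(\pi/m)$ with $m\ge3$ integer; E-GCM graph with nodes $\gamma_i$, adjacent iff $M_{ij}\neq0$. $W=W(\Gamma,M)$: generators $s_i$, $s_i^2=e$, $(s_is_j)^{m_{ij}}=e$, with $m_{ij}=k$ if $M_{ij}M_{ji}=4\cos^2(\pi/k)$ ($k\ge2$ integer), $m_{ij}=\infty$ if $M_{ij}M_{ji}\ge4$. $W$ acts on real $V$ with basis $(\alpha_i)$ by $s_i.\alpha_j=\alpha_j-M_{ij}\alpha_i$, and on the dual space $V^*$ by $\langle w.\lambda,v\rangle=\langle\lambda,w^{-1}.v\rangle$. Let $D=\{\lambda\in V^*:\langle\lambda,\alpha_i\rangle\ge0\ \forall i\}$ and the Tits cone $U_M=\bigcup_{w\in W}w.D$. Odd-adjacent: $m_{ij}$ odd; $K_{ji}:=-M_{ji}/(2\cos(\pi/m_{ij}))$. An OA-cycle is a sequence of nodes $[\gamma_{i_0},\dots,\gamma_{i_p}]$ with consecutive nodes odd-adjacent and $\gamma_{i_p}=\gamma_{i_0}$; $\Pi=K_{i_pi_{p-1}}\cdots K_{i_1i_0}$. $(\Gamma,M)$ is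 unital OA-cyclic if $\Pi=1$ for every OA-cycle. *)

theory Defs
  imports Complex_Main
begin

text \<open>The index set I_n is modelled by a finite type 'i; a matrix is M :: 'i => 'i => real.\<close>

definition egcm :: "('i \<Rightarrow> 'i \<Rightarrow> real) \<Rightarrow> bool" where
  "egcm M \<longleftrightarrow>
     (\<forall>i. M i i = 2) \<and>
     (\<forall>i j. i \<noteq> j \<longrightarrow> M i j \<le> 0) \<and>
     (\<forall>i j. M i j \<noteq> 0 \<longleftrightarrow> M j i \<noteq> 0) \<and>
     (\<forall>i j. i \<noteq> j \<longrightarrow> M i j * M j i \<noteq> 0 \<longrightarrow>
        M i j * M j i \<ge> 4 \<or> (\<exists>m::nat. m \<ge> 3 \<and> M i j * M j i = 4 * (cos (pi / real m))\<^sup>2))"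

definition egcm_adjacent :: "('i \<Rightarrow> 'i \<Rightarrow> real) \<Rightarrow> 'i \<Rightarrow> 'i \<Rightarrow> bool" where
  "egcm_adjacent M i j \<longleftrightarrow> i \<noteq> j \<and> M i j \<noteq> 0"

definition egcm_connected :: "('i \<Rightarrow> 'i \<Rightarrow> real) \<Rightarrow> bool" where
  "egcm_connected M \<longleftrightarrow> (\<forall>i j. (i, j) \<in> {(a, b). egcm_adjacent M a b}\<^sup>*)"

text \<open>m_ij for i \<noteq> j with M_ij M_ji < 4: the integer k \<ge> 2 with M_ij M_ji = 4 cos^2(pi/k).\<close>
definition cox_m :: "('i \<Rightarrow> 'i \<Rightarrow> real) \<Rightarrow> 'i \<Rightarrow> 'i \<Rightarrow> nat" where
  "cox_m M i j = (THE k. k \<ge> 2 \<and> M i j * M j i = 4 * (cos (pi / real k))\<^sup>2)"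

definition odd_adjacent :: "('i \<Rightarrow> 'i \<Rightarrow> real) \<Rightarrow> 'i \<Rightarrow> 'i \<Rightarrow> bool" where
  "odd_adjacent M i j \<longleftrightarrow> i \<noteq> j \<and>
     (\<exists>k::nat. k \<ge> 2 \<and> odd k \<and> M i j * M j i = 4 * (cos (pi / real k))\<^sup>2)"

definition Kcoef :: "('i \<Rightarrow> 'i \<Rightarrow> real) \<Rightarrow> 'i \<Rightarrow> 'i \<Rightarrow> real" where
  "Kcoef M j i = - M j i / (2 * cos (pi / real (cox_m M i j)))"

definition OA_cycle :: "('i \<Rightarrow> 'i \<Rightarrow> real) \<Rightarrow> 'i list \<Rightarrow> bool" where
  "OA_cycle M xs \<longleftrightarrow> xs \<noteq> [] \<and> last xs = hd xs \<and>
     (\<forall>k. Suc k < length xs \<longrightarrow> odd_adjacent M (xs ! k) (xs ! Suc k))"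

definition OA_product :: "('i \<Rightarrow> 'i \<Rightarrow> real) \<Rightarrow> 'i list \<Rightarrow> real" where
  "OA_product M xs = (\<Prod>k<length xs - 1. Kcoef M (xs ! Suc k) (xs ! k))"

definition unital_OA_cyclic :: "('i \<Rightarrow> 'i \<Rightarrow> real) \<Rightarrow> bool" where
  "unital_OA_cyclic M \<longleftrightarrow> (\<forall>xs. OA_cycle M xs \<longrightarrow> OA_product M xs = 1)"

text \<open>The Coxeter group W(Gamma,M) by generators and relations: words in the generators s_i
  (lists of indices) modulo the congruence generated by the defining relators.\<close>
inductive cox_relator :: "('i \<Rightarrow> 'i \<Rightarrow> real) \<Rightarrow> 'i list \<Rightarrow> bool" for M where
  inv: "cox_relator M [i, i]"
| braid: "\<lbrakk>i \<noteq> j; k \<ge> 2; M i j * M j i = 4 * (cos (pi / real k))\<^sup>2\<rbrakk>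
           \<Longrightarrow> cox_relator M (concat (replicate k [i, j]))"

inductive cox_eq :: "('i \<Rightarrow> 'i \<Rightarrow> real) \<Rightarrow> 'i list \<Rightarrow> 'i list \<Rightarrow> bool" for M where
  refl: "cox_eq M u u"
| sym: "cox_eq M u v \<Longrightarrow> cox_eq M v u"
| trans: "cox_eq M u v \<Longrightarrow> cox_eq M v w \<Longrightarrow> cox_eq M u w"
| rel: "cox_relator M r \<Longrightarrow> cox_eq M (u @ r @ v) (u @ v)"

definition coxeter_group_infinite :: "('i \<Rightarrow> 'i \<Rightarrow> real) \<Rightarrow> bool" where
  "coxeter_group_infinite M \<longleftrightarrow> infinite (UNIV // {(u, v). cox_eq M u v})"

text \<open>V^* is identified with 'i => real via lambda |-> (<lambda, alpha_j>)_j (dual basis coordinates).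
  Then <s_i.lambda, alpha_j> = <lambda, s_i.alpha_j> = lambda_j - M_ij lambda_i.\<close>
definition dual_refl :: "('i \<Rightarrow> 'i \<Rightarrow> real) \<Rightarrow> 'i \<Rightarrow> ('i \<Rightarrow> real) \<Rightarrow> ('i \<Rightarrow> real)" where
  "dual_refl M i l = (\<lambda>j. l j - M i j * l i)"

fun word_act :: "('i \<Rightarrow> 'i \<Rightarrow> real) \<Rightarrow> 'i list \<Rightarrow> ('i \<Rightarrow> real) \<Rightarrow> ('i \<Rightarrow> real)" where
  "word_act M [] l = l"
| "word_act M (i # w) l = dual_refl M i (word_act M w l)"

definition fund_chamber :: "('i \<Rightarrow> real) set" where
  "fund_chamber = {l. \<forall>i. l i \<ge> 0}"

definition tits_cone :: "('i \<Rightarrow> 'i \<Rightarrow> real) \<Rightarrow> ('i \<Rightarrow> real) set" where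
  "tits_cone M = (\<Union>w. word_act M w ` fund_chamber)"

end

theory Submission
  imports Defs
begin

text \<open>The rank-two computation (Chebyshev polynomials) shows that the reflections \<open>s\<^sub>i\<close> of \<open>V\<close>
  satisfy the Coxeter relations, so \<open>W\<close> acts on \<open>V\<close>. The classical induction on length through
  minimal coset representatives of dihedral parabolic subgroups shows that each root \<open>w \<alpha>\<^sub>i\<close> is
  nonnegative or nonpositive, and nonnegative if \<open>\<ell>(w s\<^sub>i) > \<ell>(w)\<close>; hence a reduced word of
  length \<open>n\<close> makes at least \<open>n\<close> positive roots negative.

  Let \<open>0 \<noteq> \<lambda> = w \<mu>\<close> and \<open>-\<lambda> = w' \<mu>'\<close> with \<open>\<mu>, \<mu>' \<in> D\<close>. A positive root \<open>\<beta>\<close> with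
  \<open>\<langle>\<lambda>, \<beta>\<rangle> \<noteq> 0\<close> is made negative by \<open>w\<^sup>-\<^sup>1\<close> or by \<open>w'\<^sup>-\<^sup>1\<close>, so there are finitely many of them.
  Transporting by \<open>w\<close>, only finitely many roots have a positive \<open>\<alpha>\<^sub>s\<close>-coordinate, where \<open>\<mu>\<^sub>s > 0\<close>,
  and connectedness of the graph spreads this to every coordinate. So there are finitely many
  roots, reduced words have bounded length, and \<open>W\<close> is finite.\<close>

section \<open>The geometric representation\<close>

text \<open>Vectors of \<open>V\<close> are coordinate functions with respect to the basis \<open>(\<alpha>\<^sub>i)\<close>, so that
  \<open>s\<^sub>i.x = x - (\<Sum>\<^sub>k M\<^sub>i\<^sub>k x\<^sub>k) \<alpha>\<^sub>i\<close>; \<open>pairing\<close> is the duality with the coordinates of \<open>V\<^sup>*\<close> used in \<open>Defs\<close>.\<close>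

definition basis_vec :: "'i \<Rightarrow> 'i \<Rightarrow> real" where
  "basis_vec i = (\<lambda>k. if k = i then 1 else 0)"

definition scale_vec :: "real \<Rightarrow> ('i \<Rightarrow> real) \<Rightarrow> 'i \<Rightarrow> real" where
  "scale_vec t x = (\<lambda>k. t * x k)"

definition add_vec :: "('i \<Rightarrow> real) \<Rightarrow> ('i \<Rightarrow> real) \<Rightarrow> 'i \<Rightarrow> real" where
  "add_vec x y = (\<lambda>k. x k + y k)"

definition pairing :: "('i \<Rightarrow> real) \<Rightarrow> ('i \<Rightarrow> real) \<Rightarrow> real" where
  "pairing l x = (\<Sum>k\<in>UNIV. l k * x k)"

definition root_refl :: "('i \<Rightarrow> 'i \<Rightarrow> real) \<Rightarrow> 'i \<Rightarrow> ('i \<Rightarrow> real) \<Rightarrow> 'i \<Rightarrow> real" where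
  "root_refl M i x = (\<lambda>k. x k - (if k = i then pairing (M i) x else 0))"

fun root_act :: "('i \<Rightarrow> 'i \<Rightarrow> real) \<Rightarrow> 'i list \<Rightarrow> ('i \<Rightarrow> real) \<Rightarrow> 'i \<Rightarrow> real" where
  "root_act M [] x = x"
| "root_act M (i # w) x = root_refl M i (root_act M w x)"

lemma pairing_scale_vec: "pairing l (scale_vec t x) = t * pairing l x"
  by (simp add: pairing_def scale_vec_def sum_distrib_left algebra_simps)

lemma pairing_add_vec: "pairing l (add_vec x y) = pairing l x + pairing l y"
  by (simp add: pairing_def add_vec_def sum.distrib algebra_simps)

lemma pairing_uminus_left: "pairing (\<lambda>j. - l j) x = - pairing l x"
  by (simp add: pairing_def sum_negf)

lemma root_refl_scale_vec: "root_refl M i (scale_vec t x) = scale_vec t (root_refl M i x)"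
  using pairing_scale_vec[of "M i" t x] by (auto simp: root_refl_def scale_vec_def fun_eq_iff algebra_simps)

lemma root_refl_add_vec: "root_refl M i (add_vec x y) = add_vec (root_refl M i x) (root_refl M i y)"
  using pairing_add_vec[of "M i" x y] by (auto simp: root_refl_def add_vec_def fun_eq_iff algebra_simps)

lemma root_act_scale_vec: "root_act M w (scale_vec t x) = scale_vec t (root_act M w x)"
  by (induction w) (auto simp: root_refl_scale_vec)

lemma root_act_add_vec: "root_act M w (add_vec x y) = add_vec (root_act M w x) (root_act M w y)"
  by (induction w) (auto simp: root_refl_add_vec)

lemma root_act_append: "root_act M (u @ v) x = root_act M u (root_act M v x)"
  by (induction u) auto

lemma root_act_zero: "root_act M w (\<lambda>_. 0) = (\<lambda>_. 0)"
  using root_act_scale_vec[of M w 0 "\<lambda>_. 0"] by (simp add: scale_vec_def)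

lemma root_act_fixed: "(\<And>l. l \<in> set w \<Longrightarrow> root_refl M l q = q) \<Longrightarrow> root_act M w q = q"
  by (induction w) auto

lemma root_refl_involutive:
  fixes M :: "'i::finite \<Rightarrow> 'i \<Rightarrow> real"
  assumes "M i i = 2"
  shows "root_refl M i (root_refl M i x) = x"
proof -
  have "pairing (M i) (root_refl M i x)
      = (\<Sum>k\<in>UNIV. M i k * x k - (if k = i then M i i * pairing (M i) x else 0))"
    unfolding pairing_def root_refl_def by (rule sum.cong) (auto simp: algebra_simps)
  also have "\<dots> = pairing (M i) x - M i i * pairing (M i) x"
    by (simp add: sum_subtractf pairing_def)
  finally have "pairing (M i) (root_refl M i x) = - pairing (M i) x"
    using assms by simp
  then show ?thesis
    unfolding root_refl_def[of M i "root_refl M i x"] by (simp add: root_refl_def fun_eq_iff)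
qed

lemma root_act_rev_cancel:
  fixes M :: "'i::finite \<Rightarrow> 'i \<Rightarrow> real"
  assumes "\<And>i. M i i = 2"
  shows "root_act M (rev w) (root_act M w x) = x"
  by (induction w arbitrary: x) (auto simp: root_act_append root_refl_involutive assms)

lemma root_refl_basis_vec_self:
  fixes M :: "'i::finite \<Rightarrow> 'i \<Rightarrow> real"
  assumes "M i i = 2"
  shows "root_refl M i (basis_vec i) = scale_vec (-1) (basis_vec i)"
proof -
  have "pairing (M i) (basis_vec i) = M i i"
    unfolding pairing_def basis_vec_def by (simp add: if_distrib cong: if_cong)
  then show ?thesis
    using assms by (auto simp: root_refl_def scale_vec_def basis_vec_def fun_eq_iff)
qed

lemma pairing_dual_refl:
  fixes M :: "'i::finite \<Rightarrow> 'i \<Rightarrow> real"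
  shows "pairing (dual_refl M i l) x = pairing l (root_refl M i x)"
proof -
  have "pairing (dual_refl M i l) x = (\<Sum>k\<in>UNIV. l k * x k - l i * (M i k * x k))"
    unfolding pairing_def dual_refl_def by (rule sum.cong) (auto simp: algebra_simps)
  also have "\<dots> = (\<Sum>k\<in>UNIV. l k * x k - (if k = i then l i * pairing (M i) x else 0))"
    by (simp add: sum_subtractf pairing_def sum_distrib_left)
  also have "\<dots> = pairing l (root_refl M i x)"
    unfolding pairing_def root_refl_def by (rule sum.cong) (auto simp: algebra_simps)
  finally show ?thesis .
qed

lemma pairing_word_act:
  fixes M :: "'i::finite \<Rightarrow> 'i \<Rightarrow> real"
  shows "pairing (word_act M w l) x = pairing l (root_act M (rev w) x)"
  by (induction w arbitrary: x) (auto simp: pairing_dual_refl root_act_append)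

lemma word_act_zero: "word_act M w (\<lambda>_. 0) = (\<lambda>_. 0)"
  by (induction w) (auto simp: dual_refl_def)

section \<open>Words in the Coxeter generators\<close>

lemma cox_eq_append_cong: "cox_eq M u v \<Longrightarrow> cox_eq M (p @ u @ q) (p @ v @ q)"
proof (induction rule: cox_eq.induct)
  case (rel r u v)
  have "cox_eq M ((p @ u) @ r @ (v @ q)) ((p @ u) @ (v @ q))" by (rule cox_eq.rel[OF rel])
  then show ?case by simp
qed (auto intro: cox_eq.intros)

lemma cox_eq_append_cong_left: "cox_eq M u v \<Longrightarrow> cox_eq M (u @ q) (v @ q)"
  using cox_eq_append_cong[of M u v "[]" q] by simp

lemma cox_eq_append_cong_right: "cox_eq M u v \<Longrightarrow> cox_eq M (p @ u) (p @ v)"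
  using cox_eq_append_cong[of M u v p "[]"] by simp

lemma cox_eq_append: "cox_eq M u u' \<Longrightarrow> cox_eq M v v' \<Longrightarrow> cox_eq M (u @ v) (u' @ v')"
  by (meson cox_eq.trans cox_eq_append_cong_left cox_eq_append_cong_right)

lemma cox_eq_cancel_square: "cox_eq M (p @ [i, i] @ q) (p @ q)"
  by (rule cox_eq.rel) (rule cox_relator.inv)

lemma cox_relator_even_length: "cox_relator M r \<Longrightarrow> even (length r)"
proof (induction rule: cox_relator.induct)
  case (braid i j k)
  have "length (concat (replicate k [i, j])) = 2 * k" by (induction k) auto
  then show ?case by simp
qed simp

lemma cox_eq_even_length: "cox_eq M u v \<Longrightarrow> even (length u) = even (length v)"
  by (induction rule: cox_eq.induct) (auto dest: cox_relator_even_length)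

lemma cox_relator_rev: "cox_relator M r \<Longrightarrow> cox_relator M (rev r)"
proof (induction rule: cox_relator.induct)
  case (inv i) then show ?case by (simp add: cox_relator.inv)
next
  case (braid i j k)
  have "rev (concat (replicate k [i, j])) = concat (replicate k [j, i])"
    by (simp add: rev_concat)
  moreover have "cox_relator M (concat (replicate k [j, i]))"
    using braid by (intro cox_relator.braid) (auto simp: mult.commute)
  ultimately show ?case by simp
qed

lemma cox_eq_rev: "cox_eq M u v \<Longrightarrow> cox_eq M (rev u) (rev v)"
proof (induction rule: cox_eq.induct)
  case (rel r u v)
  have "cox_eq M (rev v @ rev r @ rev u) (rev v @ rev u)"
    by (rule cox_eq.rel[OF cox_relator_rev[OF rel]])
  then show ?case by simp
qed (auto intro: cox_eq.intros)

lemma cox_eq_rev_append_self: "cox_eq M (rev w @ w) []"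
proof (induction w)
  case (Cons a w)
  have "cox_eq M (rev w @ [a, a] @ w) (rev w @ w)" by (rule cox_eq_cancel_square)
  then show ?case using Cons by (auto intro: cox_eq.trans)
qed (simp add: cox_eq.refl)

definition cox_length :: "('i \<Rightarrow> 'i \<Rightarrow> real) \<Rightarrow> 'i list \<Rightarrow> nat" where
  "cox_length M w = (LEAST n. \<exists>v. cox_eq M w v \<and> length v = n)"

definition reduced :: "('i \<Rightarrow> 'i \<Rightarrow> real) \<Rightarrow> 'i list \<Rightarrow> bool" where
  "reduced M w \<longleftrightarrow> cox_length M w = length w"

lemma cox_length_witness: "\<exists>v. cox_eq M w v \<and> length v = cox_length M w"
  unfolding cox_length_def by (rule LeastI_ex) (auto intro: cox_eq.refl)

lemma cox_length_le: "cox_eq M w v \<Longrightarrow> cox_length M w \<le> length v"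
  unfolding cox_length_def by (rule Least_le) auto

lemma cox_length_le_length: "cox_length M w \<le> length w"
  by (rule cox_length_le) (rule cox_eq.refl)

lemma cox_length_cong: "cox_eq M w w' \<Longrightarrow> cox_length M w = cox_length M w'"
proof -
  assume h: "cox_eq M w w'"
  obtain v where v: "cox_eq M w v" "length v = cox_length M w" using cox_length_witness by blast
  obtain v' where v': "cox_eq M w' v'" "length v' = cox_length M w'" using cox_length_witness by blast
  have "cox_length M w \<le> cox_length M w'"
    using cox_length_le[of M w v'] h v' by (metis cox_eq.trans)
  moreover have "cox_length M w' \<le> cox_length M w"
    using cox_length_le[of M w' v] h v by (metis cox_eq.trans cox_eq.sym)
  ultimately show ?thesis by simp
qed

lemma cox_length_append_le: "cox_length M (u @ v) \<le> cox_length M u + cox_length M v"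
proof -
  obtain u' where u': "cox_eq M u u'" "length u' = cox_length M u" using cox_length_witness by blast
  obtain v' where v': "cox_eq M v v'" "length v' = cox_length M v" using cox_length_witness by blast
  have "cox_eq M (u @ v) (u' @ v')" by (rule cox_eq_append[OF u'(1) v'(1)])
  then show ?thesis using cox_length_le u' v' by fastforce
qed

lemma cox_length_snoc_le: "cox_length M (w @ [i]) \<le> Suc (cox_length M w)"
  using cox_length_append_le[of M w "[i]"] cox_length_le_length[of M "[i]"] by simp

lemma cox_length_snoc:
  "cox_length M (w @ [i]) = Suc (cox_length M w) \<or> cox_length M w = Suc (cox_length M (w @ [i]))"
proof -
  have "cox_eq M (w @ [i, i] @ []) (w @ [])" by (rule cox_eq_cancel_square)
  then have "cox_length M w = cox_length M ((w @ [i]) @ [i])"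
    using cox_length_cong by fastforce
  then have "cox_length M w \<le> Suc (cox_length M (w @ [i]))"
    using cox_length_snoc_le by metis
  moreover have "even (cox_length M (w @ [i])) \<noteq> even (cox_length M w)"
  proof -
    have "even (cox_length M v) = even (length v)" for v
      using cox_length_witness[of M v] cox_eq_even_length by metis
    then show ?thesis by simp
  qed
  moreover have "a \<le> Suc b \<Longrightarrow> b \<le> Suc a \<Longrightarrow> even a \<noteq> even b \<Longrightarrow> a = Suc b \<or> b = Suc a"
    for a b :: nat by presburger
  ultimately show ?thesis using cox_length_snoc_le[of M w i] by blast
qed

lemma reduced_snocD: "reduced M (w @ [i]) \<Longrightarrow> reduced M w \<and> cox_length M w < cox_length M (w @ [i])"
  using cox_length_snoc[of M w i] cox_length_le_length[of M w] unfolding reduced_def by auto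

lemma reduced_rev: "reduced M (rev w) = reduced M w"
proof -
  have "cox_length M (rev v) \<le> cox_length M v" for v
  proof -
    obtain v' where "cox_eq M v v'" "length v' = cox_length M v" using cox_length_witness by blast
    then show ?thesis using cox_length_le[OF cox_eq_rev] by fastforce
  qed
  from this[of w] this[of "rev w"] show ?thesis unfolding reduced_def by simp
qed

lemma not_reduced_square: "\<not> reduced M (p @ [z, z] @ q)"
  using cox_length_le[OF cox_eq_cancel_square, of M p z q] unfolding reduced_def by simp

fun alt_word :: "'i \<Rightarrow> 'i \<Rightarrow> nat \<Rightarrow> 'i list" where
  "alt_word x y 0 = []"
| "alt_word x y (Suc n) = x # alt_word y x n"

lemma length_alt_word [simp]: "length (alt_word x y n) = n"
  by (induction n arbitrary: x y) auto

lemma alt_word_Suc_snoc: "alt_word x y (Suc n) = alt_word x y n @ [if even n then x else y]"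
  by (induction n arbitrary: x y) auto

lemma alt_word_add:
  "alt_word x y (n + k) = alt_word x y n @ (if even n then alt_word x y k else alt_word y x k)"
  by (induction n arbitrary: x y) auto

lemma rev_alt_word: "rev (alt_word x y n) = (if even n then alt_word y x n else alt_word x y n)"
proof (induction n arbitrary: x y)
  case (Suc n)
  have "rev (alt_word x y (Suc n)) = rev (alt_word y x n) @ [x]" by simp
  then show ?case unfolding Suc.IH using alt_word_Suc_snoc[of x y n] alt_word_Suc_snoc[of y x n]
    by (cases "even n") (simp_all only: if_True if_False, simp_all)
qed simp

lemma rev_alt_word_Suc: "rev (alt_word x y (Suc n)) = (if even n then x else y) # rev (alt_word x y n)"
  using alt_word_Suc_snoc[of x y n] by simp

lemma concat_replicate_alt_word: "concat (replicate m [x, y]) = alt_word x y (2 * m)"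
  by (induction m) auto

lemma alt_word_if_no_square:
  assumes "x \<noteq> y" "set w \<subseteq> {x, y}" "\<And>p q z. x # w \<noteq> p @ [z, z] @ q"
  shows "x # w = alt_word x y (Suc (length w))"
  using assms
proof (induction w arbitrary: x y)
  case (Cons a w)
  have a: "a = y" using Cons.prems(1,2) Cons.prems(3)[of "[]" x w] by auto
  have "a # w = alt_word a x (Suc (length w))"
  proof (rule Cons.IH)
    show "a \<noteq> x" "set w \<subseteq> {a, x}" using a Cons.prems by auto
    show "a # w \<noteq> p @ [z, z] @ q" for p q z using Cons.prems(3)[of "x # p" z q] by auto
  qed
  then show ?case using a by simp
qed simp

lemma cox_eq_alt_word_swap:
  assumes "cox_relator M (concat (replicate m [x, y]))"
  shows "cox_eq M (alt_word x y m) (alt_word y x m)"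
proof -
  have "concat (replicate m [x, y]) = alt_word x y m @ rev (alt_word y x m)"
    unfolding concat_replicate_alt_word mult_2 alt_word_add rev_alt_word by simp
  then have rel: "cox_eq M (alt_word x y m @ rev (alt_word y x m)) []"
    using cox_eq.rel[OF assms, of "[]" "[]"] by simp
  have "cox_eq M (alt_word x y m) (alt_word x y m @ (rev (alt_word y x m) @ alt_word y x m))"
    using cox_eq_append_cong_right[OF cox_eq_rev_append_self, of M "alt_word x y m"]
    by (simp add: cox_eq.sym)
  also have "cox_eq M ((alt_word x y m @ rev (alt_word y x m)) @ alt_word y x m) ([] @ alt_word y x m)"
    by (rule cox_eq_append_cong_left[OF rel])
  ultimately show ?thesis by (auto intro: cox_eq.trans)
qed

lemma cox_eq_alt_word_shorten:
  assumes "cox_relator M (concat (replicate m [q, p]))" "1 \<le> m"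
  shows "cox_eq M (alt_word p q (Suc m)) (alt_word q p (m - 1))"
proof -
  have "cox_eq M (alt_word p q (Suc m)) ([p] @ alt_word p q m)"
    using cox_eq_append_cong_right[OF cox_eq_alt_word_swap[OF assms(1)], of "[p]"] by simp
  also have "alt_word p q m = p # alt_word q p (m - 1)" using assms(2) by (cases m) auto
  finally have "cox_eq M (alt_word p q (Suc m)) ([] @ [p, p] @ alt_word q p (m - 1))" by simp
  then show ?thesis
    using cox_eq_cancel_square[of M "[]" p "alt_word q p (m - 1)"] by (auto intro: cox_eq.trans)
qed

lemma reduced_alt_word_le:
  assumes "cox_relator M (concat (replicate m [x, y]))" "cox_relator M (concat (replicate m [y, x]))"
    "1 \<le> m" "reduced M (alt_word x y N)"
  shows "N \<le> m"
proof (rule ccontr)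
  assume "\<not> N \<le> m"
  then obtain d where d: "N = d + Suc m" by (metis add.commute le_Suc_ex not_less_eq_eq)
  obtain p q where pq: "alt_word x y N = alt_word x y d @ alt_word p q (Suc m)"
    and rel: "cox_relator M (concat (replicate m [q, p]))"
    using assms(1,2) unfolding d alt_word_add by (cases "even d") auto
  have "cox_eq M (alt_word x y N) (alt_word x y d @ alt_word q p (m - 1))"
    unfolding pq by (rule cox_eq_append_cong_right[OF cox_eq_alt_word_shorten[OF rel assms(3)]])
  then have "cox_length M (alt_word x y N) \<le> d + (m - 1)" using cox_length_le by fastforce
  then show False using assms(4) d unfolding reduced_def by simp
qed

lemma reduced_rank2_word:
  assumes "i \<noteq> j" "set u \<subseteq> {i, j}" "reduced M (u @ [i])"
  shows "u = rev (alt_word j i (length u))"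
    and "\<And>m::nat. m \<ge> 2 \<Longrightarrow> M i j * M j i = 4 * (cos (pi / real m))\<^sup>2 \<Longrightarrow> length u < m"
proof -
  have r: "reduced M (i # rev u)" using assms(3) reduced_rev[of M "u @ [i]"] by simp
  have "i # rev u = alt_word i j (Suc (length (rev u)))"
    using alt_word_if_no_square[OF assms(1)] assms(2) r not_reduced_square by (metis set_rev)
  then have alt: "i # rev u = alt_word i j (Suc (length u))" by simp
  then show "u = rev (alt_word j i (length u))" by (metis alt_word.simps(2) list.inject rev_rev_ident)
  fix m :: nat assume m: "m \<ge> 2" "M i j * M j i = 4 * (cos (pi / real m))\<^sup>2"
  have "cox_relator M (concat (replicate m [i, j]))" "cox_relator M (concat (replicate m [j, i]))"
    using m assms(1) by (auto intro!: cox_relator.braid simp: mult.commute)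
  from reduced_alt_word_le[OF this _ r[unfolded alt]] m show "length u < m" by simp
qed

section \<open>The Coxeter relations hold on \<open>V\<close>\<close>

text \<open>\<open>cheb_U t n\<close> is the Chebyshev polynomial \<open>U\<^sub>n\<^sub>-\<^sub>1(t/2)\<close> of the second kind.\<close>

fun cheb_U :: "real \<Rightarrow> nat \<Rightarrow> real" where
  "cheb_U t 0 = 0"
| "cheb_U t (Suc 0) = 1"
| "cheb_U t (Suc (Suc n)) = t * cheb_U t (Suc n) - cheb_U t n"

lemma cheb_U_cos: "cheb_U (2 * cos f) n * sin f = sin (real n * f)"
proof (induction "2 * cos f" n rule: cheb_U.induct)
  case (3 n)
  have e1: "real (Suc (Suc n)) * f = real (Suc n) * f + f" by (simp add: algebra_simps)
  have e2: "real n * f = real (Suc n) * f - f" by (simp add: algebra_simps)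
  have "cheb_U (2 * cos f) (Suc (Suc n)) * sin f
      = 2 * cos f * (cheb_U (2 * cos f) (Suc n) * sin f) - cheb_U (2 * cos f) n * sin f"
    by (simp add: algebra_simps)
  also have "\<dots> = 2 * cos f * sin (real (Suc n) * f) - sin (real n * f)" using 3 by simp
  also have "\<dots> = sin (real (Suc (Suc n)) * f)"
    unfolding e1 e2 sin_add sin_diff by (simp add: algebra_simps)
  finally show ?case .
qed simp_all

lemma cheb_U_mono_nonneg: "2 \<le> t \<Longrightarrow> 0 \<le> cheb_U t n \<and> cheb_U t n \<le> cheb_U t (Suc n)"
proof (induction n)
  case (Suc n)
  then have "0 \<le> cheb_U t n" "cheb_U t n \<le> cheb_U t (Suc n)" by auto
  moreover have "2 * cheb_U t (Suc n) \<le> t * cheb_U t (Suc n)"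
    using calculation Suc.prems by (intro mult_right_mono) auto
  ultimately show ?case by simp
qed simp

lemma cheb_U_cos_nonneg:
  assumes "2 \<le> m" "n \<le> m"
  shows "0 \<le> cheb_U (2 * cos (pi / real m)) n"
proof -
  have "sin (pi / real m) > 0" using assms by (intro sin_gt_zero) (auto simp: field_simps)
  moreover have "0 \<le> sin (real n * (pi / real m))"
    using assms by (intro sin_ge_zero) (auto simp: field_simps)
  ultimately show ?thesis using cheb_U_cos by (metis zero_le_mult_iff not_le order_less_asym)
qed

lemma cos_pi_div_sq_lt_1:
  assumes "2 \<le> k"
  shows "(cos (pi / real k))\<^sup>2 < 1"
proof -
  have "0 < pi / real k" "pi / real k < pi" using assms by (auto simp: field_simps)
  then have "sin (pi / real k) > 0" by (rule sin_gt_zero)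
  then show ?thesis using sin_cos_squared_add[of "pi / real k"] by (smt (verit) zero_less_power)
qed

text \<open>The product \<open>s\<^sub>i s\<^sub>j\<close> restricted to the span of \<open>\<alpha>\<^sub>i, \<alpha>\<^sub>j\<close>, with \<open>c = M\<^sub>i\<^sub>j\<close> and \<open>d = M\<^sub>j\<^sub>i\<close>.\<close>

definition rank2_step :: "real \<Rightarrow> real \<Rightarrow> real \<times> real \<Rightarrow> real \<times> real" where
  "rank2_step c d z = ((c * d - 1) * fst z + c * snd z, - d * fst z - snd z)"

lemma rank2_step_pow:
  "(rank2_step c d ^^ Suc n) z =
     (cheb_U (c * d - 2) (Suc n) * fst (rank2_step c d z) - cheb_U (c * d - 2) n * fst z,
      cheb_U (c * d - 2) (Suc n) * snd (rank2_step c d z) - cheb_U (c * d - 2) n * snd z)"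
proof (induction n)
  case (Suc n)
  have "(rank2_step c d ^^ Suc (Suc n)) z = rank2_step c d ((rank2_step c d ^^ Suc n) z)" by simp
  also have "\<dots> =
     (cheb_U (c * d - 2) (Suc (Suc n)) * fst (rank2_step c d z) - cheb_U (c * d - 2) (Suc n) * fst z,
      cheb_U (c * d - 2) (Suc (Suc n)) * snd (rank2_step c d z) - cheb_U (c * d - 2) (Suc n) * snd z)"
    unfolding Suc by (simp add: rank2_step_def) (simp add: algebra_simps)
  finally show ?case .
qed simp

lemma rank2_step_pow_period:
  assumes "2 \<le> k" "c * d = 4 * (cos (pi / real k))\<^sup>2" "c = 0 \<longleftrightarrow> d = 0"
  shows "(rank2_step c d ^^ k) z = z"
proof (cases "k = 2")
  case True
  then have "c = 0 \<and> d = 0" using assms(2,3) by simp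
  then show ?thesis using True by (simp add: rank2_step_def numeral_2_eq_2)
next
  case False
  then have k3: "3 \<le> k" using assms(1) by simp
  define f where "f = 2 * pi / real k"
  have "0 < f" "f < pi" unfolding f_def using k3 by (auto simp: field_simps)
  then have sf: "sin f > 0" by (rule sin_gt_zero)
  have t: "c * d - 2 = 2 * cos f"
    unfolding assms(2) f_def using cos_double_cos[of "pi / real k"] by (simp add: field_simps)
  have "cheb_U (2 * cos f) k * sin f = 0"
    unfolding cheb_U_cos f_def using k3 by simp
  then have Uk: "cheb_U (2 * cos f) k = 0" using sf by simp
  have "real (k - 1) * f = 2 * pi - f" unfolding f_def using k3 by (simp add: of_nat_diff field_simps)
  then have "cheb_U (2 * cos f) (k - 1) * sin f = - sin f"
    unfolding cheb_U_cos by simp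
  then have Uk1: "cheb_U (2 * cos f) (k - 1) = -1"
    using sf by (metis mult_minus_left mult_right_cancel mult_1 less_irrefl)
  have k: "k = Suc (k - 1)" using k3 by simp
  have "(rank2_step c d ^^ Suc (k - 1)) z = z"
    unfolding rank2_step_pow t using Uk Uk1 k[symmetric] by (simp add: rank2_step_def)
  then show ?thesis using k by metis
qed

definition pair_vec :: "'i \<Rightarrow> 'i \<Rightarrow> real \<Rightarrow> real \<Rightarrow> 'i \<Rightarrow> real" where
  "pair_vec i j x y = (\<lambda>l. if l = i then x else if l = j then y else 0)"

lemma pair_vec_eq_add_vec:
  "i \<noteq> j \<Longrightarrow> pair_vec i j x y = add_vec (scale_vec x (basis_vec i)) (scale_vec y (basis_vec j))"
  by (auto simp: pair_vec_def add_vec_def scale_vec_def basis_vec_def fun_eq_iff)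

lemma basis_vec_eq_pair_vec: "i \<noteq> j \<Longrightarrow> basis_vec i = pair_vec i j 1 0"
  by (auto simp: basis_vec_def pair_vec_def)

lemma pairing_pair_vec:
  fixes f :: "'i::finite \<Rightarrow> real"
  assumes "i \<noteq> j"
  shows "pairing f (pair_vec i j x y) = f i * x + f j * y"
proof -
  have "pairing f (pair_vec i j x y)
      = (\<Sum>l\<in>UNIV. (if l = i then f i * x else 0) + (if l = j then f j * y else 0))"
    unfolding pairing_def pair_vec_def by (rule sum.cong) (use assms in auto)
  then show ?thesis by (simp add: sum.distrib)
qed

lemma root_refl_pair_vec_fst:
  fixes M :: "'i::finite \<Rightarrow> 'i \<Rightarrow> real"
  assumes "i \<noteq> j" "M i i = 2"
  shows "root_refl M i (pair_vec i j x y) = pair_vec i j (- x - M i j * y) y"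
  using pairing_pair_vec[OF assms(1), of "M i"] assms
  by (auto simp: root_refl_def pair_vec_def fun_eq_iff)

lemma root_refl_pair_vec_snd:
  fixes M :: "'i::finite \<Rightarrow> 'i \<Rightarrow> real"
  assumes "i \<noteq> j" "M j j = 2"
  shows "root_refl M j (pair_vec i j x y) = pair_vec i j x (- y - M j i * x)"
  using pairing_pair_vec[OF assms(1), of "M j"] assms
  by (auto simp: root_refl_def pair_vec_def fun_eq_iff)

lemma root_act_pow_pair_vec:
  fixes M :: "'i::finite \<Rightarrow> 'i \<Rightarrow> real"
  assumes "i \<noteq> j" "M i i = 2" "M j j = 2"
  shows "(root_act M [i, j] ^^ n) (pair_vec i j x y)
    = pair_vec i j (fst ((rank2_step (M i j) (M j i) ^^ n) (x, y)))
                   (snd ((rank2_step (M i j) (M j i) ^^ n) (x, y)))"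
proof (induction n)
  case (Suc n)
  let ?z = "(rank2_step (M i j) (M j i) ^^ n) (x, y)"
  have "(root_act M [i, j] ^^ Suc n) (pair_vec i j x y)
      = root_refl M i (root_refl M j (pair_vec i j (fst ?z) (snd ?z)))"
    unfolding Suc[symmetric] by simp
  also have "\<dots> = pair_vec i j (fst (rank2_step (M i j) (M j i) ?z)) (snd (rank2_step (M i j) (M j i) ?z))"
    unfolding root_refl_pair_vec_snd[of i j M, OF assms(1,3)]
      root_refl_pair_vec_fst[of i j M, OF assms(1,2)]
    by (simp add: rank2_step_def) (rule arg_cong2[where f = "pair_vec i j"]; simp add: algebra_simps)
  finally show ?case by (simp only: funpow.simps comp_apply)
qed simp

text \<open>When \<open>M\<^sub>i\<^sub>j M\<^sub>j\<^sub>i < 4\<close> the form restricted to \<open>\<alpha>\<^sub>i, \<alpha>\<^sub>j\<close> is nondegenerate, so \<open>V\<close> splits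
  into the span of \<open>\<alpha>\<^sub>i, \<alpha>\<^sub>j\<close> and the common kernel of the coroots of \<open>i\<close> and \<open>j\<close>.\<close>

lemma rank2_decomposition:
  fixes M :: "'i::finite \<Rightarrow> 'i \<Rightarrow> real"
  assumes "i \<noteq> j" "M i i = 2" "M j j = 2" "M i j * M j i < 4"
  obtains x0 y0 q where "x = add_vec q (pair_vec i j x0 y0)"
    and "pairing (M i) q = 0" and "pairing (M j) q = 0"
proof -
  define A where "A = pairing (M i) x"
  define B where "B = pairing (M j) x"
  define D where "D = 4 - M i j * M j i"
  have D0: "D > 0" using assms(4) unfolding D_def by simp
  define x0 where "x0 = (2 * A - M i j * B) / D"
  define y0 where "y0 = (2 * B - M j i * A) / D"
  define q where "q = (\<lambda>l. x l - pair_vec i j x0 y0 l)"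
  have x0D: "x0 * D = 2 * A - M i j * B" and y0D: "y0 * D = 2 * B - M j i * A"
    unfolding x0_def y0_def using D0 by simp_all
  have "(2 * x0 + M i j * y0) * D = A * D" "(M j i * x0 + 2 * y0) * D = B * D"
    using x0D y0D unfolding D_def by algebra+
  then have A: "2 * x0 + M i j * y0 = A" and B: "M j i * x0 + 2 * y0 = B" using D0 by simp_all
  have "pairing f q = pairing f x - pairing f (pair_vec i j x0 y0)" for f
    unfolding q_def pairing_def by (simp add: sum_subtractf algebra_simps)
  then have "pairing (M i) q = 0" "pairing (M j) q = 0"
    using A B assms(2,3) unfolding A_def B_def pairing_pair_vec[OF assms(1)] by simp_all
  moreover have "x = add_vec q (pair_vec i j x0 y0)" unfolding q_def add_vec_def by simp
  ultimately show thesis using that by blast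
qed

lemma root_act_braid_relator:
  fixes M :: "'i::finite \<Rightarrow> 'i \<Rightarrow> real"
  assumes "i \<noteq> j" "M i i = 2" "M j j = 2" "2 \<le> k"
    and braid: "M i j * M j i = 4 * (cos (pi / real k))\<^sup>2"
    and zero: "M i j = 0 \<longleftrightarrow> M j i = 0"
  shows "root_act M (concat (replicate k [i, j])) x = x"
proof -
  have "M i j * M j i < 4" unfolding braid using cos_pi_div_sq_lt_1[OF assms(4)] by simp
  then obtain x0 y0 q where x: "x = add_vec q (pair_vec i j x0 y0)"
    and q: "pairing (M i) q = 0" "pairing (M j) q = 0"
    using rank2_decomposition[of i j M, OF assms(1-3)] by blast
  have rep: "root_act M (concat (replicate n [i, j])) y = (root_act M [i, j] ^^ n) y" for n y
    by (induction n) (auto simp: root_act_append)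
  have "root_act M (concat (replicate k [i, j])) q = q"
    by (rule root_act_fixed) (use q in \<open>auto simp: root_refl_def fun_eq_iff split: if_splits\<close>)
  moreover have "root_act M (concat (replicate k [i, j])) (pair_vec i j x0 y0) = pair_vec i j x0 y0"
    unfolding rep root_act_pow_pair_vec[of i j M, OF assms(1-3)]
    using rank2_step_pow_period[OF assms(4) braid zero] by simp
  ultimately show ?thesis unfolding x root_act_add_vec by simp
qed

lemma egcm_diag: "egcm M \<Longrightarrow> M i i = 2"
  unfolding egcm_def by blast

lemma egcm_zero_iff: "egcm M \<Longrightarrow> M i j = 0 \<longleftrightarrow> M j i = 0"
  unfolding egcm_def by blast

lemma egcm_nonpos: "egcm M \<Longrightarrow> i \<noteq> j \<Longrightarrow> M i j \<le> 0"
  unfolding egcm_def by blast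

lemma egcm_cases:
  assumes "egcm M" "i \<noteq> j"
  shows "M i j * M j i \<ge> 4 \<or> (\<exists>m::nat. m \<ge> 2 \<and> M i j * M j i = 4 * (cos (pi / real m))\<^sup>2)"
proof (cases "M i j * M j i = 0")
  case True
  then show ?thesis by (intro disjI2 exI[of _ 2]) simp
next
  case False
  then show ?thesis using assms unfolding egcm_def by (metis Suc_leD numeral_3_eq_3 numeral_2_eq_2)
qed

lemma root_act_cox_relator:
  fixes M :: "'i::finite \<Rightarrow> 'i \<Rightarrow> real"
  assumes "egcm M" "cox_relator M r"
  shows "root_act M r x = x"
  using assms(2)
proof (induction rule: cox_relator.induct)
  case (inv i)
  then show ?case by (simp add: root_refl_involutive egcm_diag[OF assms(1)])
next
  case (braid i j k)
  then show ?case
    using root_act_braid_relator egcm_diag[OF assms(1)] egcm_zero_iff[OF assms(1)] by blast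
qed

lemma root_act_cox_eq:
  fixes M :: "'i::finite \<Rightarrow> 'i \<Rightarrow> real"
  assumes "egcm M" "cox_eq M u v"
  shows "root_act M u x = root_act M v x"
  using assms(2)
proof (induction arbitrary: x rule: cox_eq.induct)
  case (rel r u v)
  then show ?case using root_act_cox_relator[OF assms(1) rel] by (simp add: root_act_append)
qed auto

section \<open>Roots are nonnegative or nonpositive\<close>

lemma cheb_U_sqrt_nonneg:
  assumes "0 < p" "t \<le> Suc n"
    and bound: "p \<ge> 4 \<or> (\<exists>m::nat. m \<ge> 2 \<and> p = 4 * (cos (pi / real m))\<^sup>2 \<and> n < m)"
  shows "0 \<le> cheb_U (sqrt p) t"
proof (cases "p \<ge> 4")
  case True
  then have "2 \<le> sqrt p" using real_sqrt_le_mono[OF True] by simp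
  then show ?thesis using cheb_U_mono_nonneg by blast
next
  case False
  with bound obtain m :: nat where m: "m \<ge> 2" "p = 4 * (cos (pi / real m))\<^sup>2" "n < m" by auto
  have "0 < pi / real m" "pi / real m \<le> pi / 2" using m(1) by (auto simp: field_simps)
  then have "0 \<le> cos (pi / real m)" by (intro cos_ge_zero) auto
  then have "sqrt p = 2 * cos (pi / real m)" unfolding m(2) by (simp add: real_sqrt_mult)
  then show ?thesis using cheb_U_cos_nonneg[of m t] m assms(2) by simp
qed

lemma root_act_alt_word_basis_vec:
  fixes M :: "'i::finite \<Rightarrow> 'i \<Rightarrow> real"
  assumes "egcm M" "i \<noteq> j" "c > 0" "c * c = M i j * M j i"
  shows "root_act M (rev (alt_word j i n)) (basis_vec i) =
    (if even n then pair_vec i j (cheb_U c (Suc n)) ((- M j i / c) * cheb_U c n)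
     else pair_vec i j (cheb_U c n) ((- M j i / c) * cheb_U c (Suc n)))"
proof (induction n)
  case 0 then show ?case using basis_vec_eq_pair_vec[OF assms(2)] by simp
next
  case (Suc n)
  have dj: "M j j = 2" and di: "M i i = 2" using egcm_diag[OF assms(1)] by auto
  show ?case
  proof (cases "even n")
    case True
    have "root_act M (rev (alt_word j i (Suc n))) (basis_vec i)
        = root_refl M j (root_act M (rev (alt_word j i n)) (basis_vec i))"
      using True by (simp only: rev_alt_word_Suc) simp
    also have "\<dots> = pair_vec i j (cheb_U c (Suc n)) (- ((- M j i / c) * cheb_U c n) - M j i * cheb_U c (Suc n))"
      using True Suc.IH root_refl_pair_vec_snd[of i j M, OF assms(2) dj] by simp
    also have "\<dots> = pair_vec i j (cheb_U c (Suc n)) ((- M j i / c) * cheb_U c (Suc (Suc n)))"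
      using assms(3) by (intro arg_cong2[where f = "pair_vec i j"]) (simp_all add: field_simps)
    finally show ?thesis using True by simp
  next
    case False
    have "root_act M (rev (alt_word j i (Suc n))) (basis_vec i)
        = root_refl M i (root_act M (rev (alt_word j i n)) (basis_vec i))"
      using False by (simp only: rev_alt_word_Suc) simp
    also have "\<dots> = pair_vec i j (- cheb_U c n - M i j * ((- M j i / c) * cheb_U c (Suc n)))
                                ((- M j i / c) * cheb_U c (Suc n))"
      using False Suc.IH root_refl_pair_vec_fst[of i j M, OF assms(2) di] by simp
    also have "- cheb_U c n - M i j * ((- M j i / c) * cheb_U c (Suc n)) = cheb_U c (Suc (Suc n))"
    proof -
      have "M i j * (M j i * cheb_U c (Suc n)) / c = c * cheb_U c (Suc n)"
        using assms(3,4) by (simp add: field_simps)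
      then show ?thesis by (simp add: algebra_simps)
    qed
    finally show ?thesis using False by simp
  qed
qed

lemma root_act_alt_word_basis_vec_nonneg:
  fixes M :: "'i::finite \<Rightarrow> 'i \<Rightarrow> real"
  assumes eg: "egcm M" and "i \<noteq> j"
    and bound: "M i j * M j i \<ge> 4 \<or> (\<exists>m::nat. m \<ge> 2 \<and> M i j * M j i = 4 * (cos (pi / real m))\<^sup>2 \<and> n < m)"
  obtains P Q where "P \<ge> 0" "Q \<ge> 0" "root_act M (rev (alt_word j i n)) (basis_vec i) = pair_vec i j P Q"
proof (cases "M j i = 0")
  case True
  then have "M i j = 0" using egcm_zero_iff[OF eg] by blast
  with True bound obtain m :: nat where m: "m \<ge> 2" "cos (pi / real m) = 0" "n < m" by auto
  have "m \<le> 2"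
  proof (rule ccontr)
    assume "\<not> m \<le> 2"
    then have "0 < pi / real m" "pi / real m < pi / 2" by (auto simp: field_simps)
    then show False using m(2) cos_gt_zero by fastforce
  qed
  then have "n = 0 \<or> n = 1" using m by auto
  moreover have "root_refl M j (pair_vec i j 1 0) = pair_vec i j 1 0"
    using root_refl_pair_vec_snd[of i j M 1 0] egcm_diag[OF eg] \<open>i \<noteq> j\<close> True by simp
  ultimately have "root_act M (rev (alt_word j i n)) (basis_vec i) = pair_vec i j 1 0"
    using basis_vec_eq_pair_vec[OF \<open>i \<noteq> j\<close>] by auto
  then show thesis by (intro that[of 1 0]) simp_all
next
  case False
  then have "M j i < 0" "M i j < 0"
    using egcm_nonpos[OF eg] egcm_zero_iff[OF eg, of i j] \<open>i \<noteq> j\<close> by (auto simp: order_less_le)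
  then have p: "M i j * M j i > 0" by (simp add: mult_neg_neg)
  define c where "c = sqrt (M i j * M j i)"
  have c: "c > 0" "c * c = M i j * M j i" unfolding c_def using p by simp_all
  have U: "0 \<le> cheb_U c n" "0 \<le> cheb_U c (Suc n)"
    unfolding c_def using cheb_U_sqrt_nonneg[OF p _ bound] by simp_all
  have "- M j i / c \<ge> 0" using \<open>M j i < 0\<close> c by (simp add: divide_nonpos_pos)
  then have K: "0 \<le> (- M j i / c) * cheb_U c n" "0 \<le> (- M j i / c) * cheb_U c (Suc n)"
    using U by (simp_all only: mult_nonneg_nonneg)
  note formula = root_act_alt_word_basis_vec[OF eg \<open>i \<noteq> j\<close> c, of n]
  show thesis
  proof (cases "even n")
    case True
    show thesis by (rule that[OF U(2) K(1)]) (use True formula in simp)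
  next
    case False
    show thesis by (rule that[OF U(1) K(2)]) (use False formula in simp)
  qed
qed

text \<open>Choosing \<open>v\<close> of minimal length among all factorisations \<open>w = v u\<close> with \<open>u\<close> a word in
  \<open>s\<^sub>i, s\<^sub>j\<close> makes \<open>v\<close> the minimal representative of the coset \<open>w W\<^sub>{\<^sub>i\<^sub>,\<^sub>j\<^sub>}\<close>.\<close>

lemma cox_length_rank2_factorisation:
  assumes "cox_length M w < cox_length M (w @ [i])" "cox_length M w \<noteq> 0"
  obtains j u v where "j \<noteq> i" "set u \<subseteq> {i, j}" "cox_eq M w (v @ u)"
    "cox_length M v < cox_length M w" "cox_length M v + length u = cox_length M w"
    "cox_length M v < cox_length M (v @ [i])" "cox_length M v < cox_length M (v @ [j])"
proof -
  define n where "n = cox_length M w"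
  obtain r where r: "cox_eq M w r" "length r = n" using cox_length_witness n_def by metis
  have "r \<noteq> []" using r(2) assms(2) n_def by auto
  then obtain r' j where rj: "r = r' @ [j]" using rev_exhaust by blast
  have "n \<le> Suc (cox_length M r')"
    using cox_length_cong[OF r(1)] cox_length_snoc_le[of M r' j] rj n_def by simp
  then have r': "cox_length M r' = n - 1"
    using cox_length_le_length[of M r'] r rj by simp
  have ji: "j \<noteq> i"
  proof
    assume "j = i"
    have "cox_eq M (w @ [i]) (r' @ [i, i] @ [])"
      using cox_eq_append_cong_left[OF r(1), of "[i]"] rj \<open>j = i\<close> by simp
    then have "cox_eq M (w @ [i]) (r' @ [])" using cox_eq_cancel_square by (metis cox_eq.trans)
    then have "cox_length M (w @ [i]) \<le> n - 1" using cox_length_cong r' by fastforce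
    then show False using assms(1) n_def by simp
  qed
  define A where "A = (\<lambda>(v, u). set u \<subseteq> {i, j} \<and> cox_eq M w (v @ u) \<and> cox_length M v + length u = n)"
  have A0: "A (r', [j])" unfolding A_def using r rj r' assms(2) n_def by auto
  then obtain p where Ap: "A p" and min: "\<And>p'. A p' \<Longrightarrow> cox_length M (fst p) \<le> cox_length M (fst p')"
    using ex_has_least_nat[of A "(r', [j])" "\<lambda>p. cox_length M (fst p)"] by blast
  obtain v u where p: "p = (v, u)" by (cases p)
  have u: "set u \<subseteq> {i, j}" "cox_eq M w (v @ u)" "cox_length M v + length u = n"
    using Ap p A_def by auto
  have "cox_length M v < cox_length M (v @ [x])" if "x \<in> {i, j}" for x
  proof (rule ccontr)
    assume "\<not> ?thesis"
    then have vx: "cox_length M v = Suc (cox_length M (v @ [x]))" using cox_length_snoc[of M v x] by auto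
    have "cox_eq M w (v @ [x, x] @ u)"
      using cox_eq.trans[OF u(2) cox_eq.sym[OF cox_eq_cancel_square]] .
    then have "cox_eq M w ((v @ [x]) @ (x # u))" by simp
    then have "A (v @ [x], x # u)" unfolding A_def using u that vx by auto
    then have "cox_length M v \<le> cox_length M (v @ [x])" using min p by fastforce
    then show False using vx by simp
  qed
  moreover have "cox_length M v < cox_length M w" using min[OF A0] p r' assms(2) n_def by simp
  moreover have "cox_length M v + length u = cox_length M w" using u(3) n_def by simp
  ultimately show thesis using that[OF ji u(1,2)] by simp
qed

lemma reduced_rank2_factor:
  assumes "cox_length M w < cox_length M (w @ [i])" "cox_eq M w (v @ u)"
    "cox_length M v + length u = cox_length M w"
  shows "reduced M (u @ [i])"
proof -
  have "cox_length M w \<le> cox_length M v + cox_length M u"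
    using cox_length_append_le[of M v u] cox_length_cong[OF assms(2)] by simp
  then have u: "cox_length M u = length u" using assms(3) cox_length_le_length[of M u] by simp
  have "cox_eq M (w @ [i]) (v @ u @ [i])" using cox_eq_append_cong_left[OF assms(2), of "[i]"] by simp
  then have "cox_length M (w @ [i]) \<le> cox_length M v + cox_length M (u @ [i])"
    using cox_length_cong cox_length_append_le[of M v "u @ [i]"] by metis
  then have "cox_length M u < cox_length M (u @ [i])" using assms(1,3) u by simp
  then show ?thesis using cox_length_snoc[of M u i] u unfolding reduced_def by auto
qed

text \<open>The root \<open>w \<alpha>\<^sub>i\<close> is written as \<open>v (P \<alpha>\<^sub>i + Q \<alpha>\<^sub>j)\<close> with \<open>P, Q \<ge> 0\<close> by the rank-two
  computation, and \<open>v \<alpha>\<^sub>i, v \<alpha>\<^sub>j \<ge> 0\<close> by induction on the length.\<close>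

lemma root_act_basis_vec_nonneg:
  fixes M :: "'i::finite \<Rightarrow> 'i \<Rightarrow> real"
  assumes eg: "egcm M" and "cox_length M w < cox_length M (w @ [i])"
  shows "0 \<le> root_act M w (basis_vec i) k"
  using assms(2)
proof (induction "cox_length M w" arbitrary: w i k rule: less_induct)
  case less
  show ?case
  proof (cases "cox_length M w = 0")
    case True
    then obtain v where "cox_eq M w v" "length v = 0" using cox_length_witness by metis
    then have "root_act M w (basis_vec i) = basis_vec i" using root_act_cox_eq[OF eg] by fastforce
    then show ?thesis by (simp add: basis_vec_def)
  next
    case False
    obtain j u v where ji: "j \<noteq> i" and u: "set u \<subseteq> {i, j}" "cox_eq M w (v @ u)"
      and v: "cox_length M v < cox_length M w" "cox_length M v + length u = cox_length M w"
      and vx: "cox_length M v < cox_length M (v @ [i])" "cox_length M v < cox_length M (v @ [j])"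
      by (rule cox_length_rank2_factorisation[OF less.prems False])
    have IH: "0 \<le> root_act M v (basis_vec i) l" "0 \<le> root_act M v (basis_vec j) l" for l
      using less.hyps[OF v(1) vx(1)] less.hyps[OF v(1) vx(2)] by simp_all
    have red: "reduced M (u @ [i])" by (rule reduced_rank2_factor[OF less.prems u(2) v(2)])
    have bound: "M i j * M j i \<ge> 4 \<or>
        (\<exists>m::nat. m \<ge> 2 \<and> M i j * M j i = 4 * (cos (pi / real m))\<^sup>2 \<and> length u < m)"
      using egcm_cases[OF eg ji[symmetric]] reduced_rank2_word(2)[OF ji[symmetric] u(1) red] by blast
    obtain P Q where PQ: "P \<ge> 0" "Q \<ge> 0"
      "root_act M (rev (alt_word j i (length u))) (basis_vec i) = pair_vec i j P Q"
      using root_act_alt_word_basis_vec_nonneg[OF eg ji[symmetric] bound] by blast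
    have "root_act M w (basis_vec i) = root_act M v (root_act M u (basis_vec i))"
      using root_act_cox_eq[OF eg u(2)] by (simp add: root_act_append)
    also have "\<dots> = root_act M v (pair_vec i j P Q)"
      using PQ(3) reduced_rank2_word(1)[OF ji[symmetric] u(1) red] by simp
    also have "\<dots> = add_vec (scale_vec P (root_act M v (basis_vec i))) (scale_vec Q (root_act M v (basis_vec j)))"
      using pair_vec_eq_add_vec[OF ji[symmetric]] by (simp add: root_act_add_vec root_act_scale_vec)
    finally show ?thesis using PQ(1,2) IH[of k] by (simp add: add_vec_def scale_vec_def)
  qed
qed

section \<open>Normalised roots and inversion sets\<close>

definition coord_sum :: "('i \<Rightarrow> real) \<Rightarrow> real" where
  "coord_sum x = (\<Sum>k\<in>UNIV. x k)"

definition normalise :: "('i \<Rightarrow> real) \<Rightarrow> 'i \<Rightarrow> real" where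
  "normalise x = scale_vec (1 / coord_sum x) x"

definition is_root_multiple :: "('i \<Rightarrow> 'i \<Rightarrow> real) \<Rightarrow> ('i \<Rightarrow> real) \<Rightarrow> bool" where
  "is_root_multiple M x \<longleftrightarrow> (\<exists>t w i. t \<noteq> 0 \<and> x = scale_vec t (root_act M w (basis_vec i)))"

text \<open>Roots are only considered up to scaling, through their representative with coordinate
  sum \<open>1\<close>; this is why the argument needs no control on the lengths of the vectors \<open>w \<alpha>\<^sub>i\<close>
  (which is what the unital OA-cyclic condition provides).\<close>

definition normalised_roots :: "('i \<Rightarrow> 'i \<Rightarrow> real) \<Rightarrow> ('i \<Rightarrow> real) set" where
  "normalised_roots M = {normalise (root_act M w (basis_vec i)) | w i. True}"

definition inversion_set :: "('i \<Rightarrow> 'i \<Rightarrow> real) \<Rightarrow> 'i list \<Rightarrow> ('i \<Rightarrow> real) set" where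
  "inversion_set M w = {r \<in> normalised_roots M. \<forall>k. root_act M w r k \<le> 0}"

definition roots_supported_at :: "('i \<Rightarrow> 'i \<Rightarrow> real) \<Rightarrow> 'i \<Rightarrow> ('i \<Rightarrow> real) set" where
  "roots_supported_at M k = {r \<in> normalised_roots M. 0 < r k}"

lemma normalise_apply: "normalise x k = x k / coord_sum x"
  by (simp add: normalise_def scale_vec_def)

lemma coord_sum_pos: "(\<And>l. 0 \<le> (x :: 'i::finite \<Rightarrow> real) l) \<Longrightarrow> 0 < x k \<Longrightarrow> 0 < coord_sum x"
  unfolding coord_sum_def by (rule sum_pos2[of UNIV k]) auto

lemma coord_sum_scale_vec: "coord_sum (scale_vec t x) = t * coord_sum x"
  by (simp add: coord_sum_def scale_vec_def sum_distrib_left)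

lemma normalise_scale_vec: "t \<noteq> 0 \<Longrightarrow> normalise (scale_vec t x) = normalise x"
  unfolding fun_eq_iff normalise_apply coord_sum_scale_vec by (simp add: scale_vec_def)

lemma coord_sum_normalise: "coord_sum x \<noteq> 0 \<Longrightarrow> coord_sum (normalise x) = 1"
  by (simp add: normalise_def coord_sum_scale_vec)

lemma normalise_nonneg:
  fixes x :: "'i::finite \<Rightarrow> real"
  assumes "(\<forall>l. 0 \<le> x l) \<or> (\<forall>l. x l \<le> 0)"
  shows "0 \<le> normalise x k"
  using assms unfolding normalise_apply coord_sum_def
  by (auto intro: divide_nonneg_nonneg divide_nonpos_nonpos sum_nonneg sum_nonpos)

context
  fixes M :: "'i::finite \<Rightarrow> 'i \<Rightarrow> real"
  assumes eg: "egcm M"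
begin

lemma root_nonneg_or_nonpos:
  "(\<forall>k. 0 \<le> root_act M w (basis_vec i) k) \<or> (\<forall>k. root_act M w (basis_vec i) k \<le> 0)"
proof (cases "cox_length M w < cox_length M (w @ [i])")
  case True
  then show ?thesis using root_act_basis_vec_nonneg[OF eg] by blast
next
  case False
  then have "cox_length M w = Suc (cox_length M (w @ [i]))" using cox_length_snoc[of M w i] by auto
  moreover have "cox_length M ((w @ [i]) @ [i]) = cox_length M w"
    using cox_length_cong[OF cox_eq_cancel_square[of M w i "[]"]] by simp
  ultimately have "\<forall>k. 0 \<le> root_act M (w @ [i]) (basis_vec i) k"
    using root_act_basis_vec_nonneg[OF eg, of "w @ [i]" i] by simp
  moreover have "root_act M (w @ [i]) (basis_vec i) = scale_vec (-1) (root_act M w (basis_vec i))"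
    by (simp add: root_act_append root_refl_basis_vec_self[OF egcm_diag[OF eg]] root_act_scale_vec)
  ultimately show ?thesis by (simp add: scale_vec_def)
qed

lemma root_nonzero: "\<exists>k. root_act M w (basis_vec i) k \<noteq> 0"
proof (rule ccontr)
  assume "\<not> ?thesis"
  then have "root_act M w (basis_vec i) = (\<lambda>_. 0)" by auto
  then have "root_act M (rev w) (root_act M w (basis_vec i)) = (\<lambda>_. 0)"
    by (simp add: root_act_zero)
  then have "basis_vec i = (\<lambda>_. (0::real))" using root_act_rev_cancel[of M, OF egcm_diag[OF eg]] by simp
  then show False unfolding basis_vec_def by (metis one_neq_zero)
qed

lemma is_root_multiple_root_act: "is_root_multiple M x \<Longrightarrow> is_root_multiple M (root_act M v x)"
proof -
  assume "is_root_multiple M x"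
  then obtain t w i where "t \<noteq> 0" "x = scale_vec t (root_act M w (basis_vec i))"
    unfolding is_root_multiple_def by blast
  then show ?thesis
    unfolding is_root_multiple_def by (auto simp: root_act_scale_vec root_act_append[symmetric])
qed

lemma is_root_multiple_scale_vec: "is_root_multiple M x \<Longrightarrow> s \<noteq> 0 \<Longrightarrow> is_root_multiple M (scale_vec s x)"
proof -
  assume "is_root_multiple M x" "s \<noteq> 0"
  then obtain t w i where "t \<noteq> 0" "x = scale_vec t (root_act M w (basis_vec i))"
    unfolding is_root_multiple_def by blast
  then have "s * t \<noteq> 0" "scale_vec s x = scale_vec (s * t) (root_act M w (basis_vec i))"
    using \<open>s \<noteq> 0\<close> by (simp_all add: scale_vec_def fun_eq_iff)
  then show ?thesis unfolding is_root_multiple_def by blast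
qed

lemma is_root_multiple_sign: "is_root_multiple M x \<Longrightarrow> (\<forall>k. 0 \<le> x k) \<or> (\<forall>k. x k \<le> 0)"
proof -
  assume "is_root_multiple M x"
  then obtain t w i where t: "t \<noteq> 0" "x = scale_vec t (root_act M w (basis_vec i))"
    unfolding is_root_multiple_def by blast
  show ?thesis
  proof (cases "t > 0")
    case True
    then show ?thesis using root_nonneg_or_nonpos[of w i] t
      by (auto simp: scale_vec_def mult_nonneg_nonneg mult_nonneg_nonpos)
  next
    case False
    then have "t < 0" using t by simp
    then show ?thesis using root_nonneg_or_nonpos[of w i] t
      by (auto simp: scale_vec_def mult_nonpos_nonneg mult_nonpos_nonpos)
  qed
qed

lemma is_root_multiple_nonzero: "is_root_multiple M x \<Longrightarrow> \<exists>k. x k \<noteq> 0"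
proof -
  assume "is_root_multiple M x"
  then obtain t w i where t: "t \<noteq> 0" "x = scale_vec t (root_act M w (basis_vec i))"
    unfolding is_root_multiple_def by blast
  obtain k where "root_act M w (basis_vec i) k \<noteq> 0" using root_nonzero by blast
  then show ?thesis using t by (auto simp: scale_vec_def)
qed

lemma coord_sum_root_multiple: "is_root_multiple M x \<Longrightarrow> coord_sum x \<noteq> 0"
proof -
  assume x: "is_root_multiple M x"
  obtain k where k: "x k \<noteq> 0" using is_root_multiple_nonzero[OF x] by blast
  show ?thesis
    using is_root_multiple_sign[OF x]
  proof
    assume "\<forall>l. 0 \<le> x l"
    then show ?thesis using coord_sum_pos[of x k] k by (simp add: order_less_le)
  next
    assume "\<forall>l. x l \<le> 0"
    moreover have "x k < 0" using k calculation by (simp add: order_less_le)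
    ultimately have "0 < coord_sum (\<lambda>l. - x l)" using coord_sum_pos[of "\<lambda>l. - x l" k] by simp
    then show ?thesis by (simp add: coord_sum_def sum_negf)
  qed
qed

lemma is_root_multiple_pos:
  assumes "is_root_multiple M x" "0 < x k"
  shows "\<forall>l. 0 \<le> x l" "0 < coord_sum x"
proof -
  show nonneg: "\<forall>l. 0 \<le> x l" using is_root_multiple_sign[OF assms(1)] assms(2) by (metis not_le)
  show "0 < coord_sum x" using coord_sum_pos[of x k] nonneg assms(2) by blast
qed

lemma normalise_mem_normalised_roots: "is_root_multiple M x \<Longrightarrow> normalise x \<in> normalised_roots M"
proof -
  assume "is_root_multiple M x"
  then obtain t w i where "t \<noteq> 0" "x = scale_vec t (root_act M w (basis_vec i))"
    unfolding is_root_multiple_def by blast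
  then have "normalise x = normalise (root_act M w (basis_vec i))" by (simp add: normalise_scale_vec)
  then show ?thesis unfolding normalised_roots_def by blast
qed

lemma normalised_rootsD:
  assumes "r \<in> normalised_roots M"
  shows "is_root_multiple M r" "\<forall>k. 0 \<le> r k" "coord_sum r = 1"
proof -
  obtain w i where r: "r = normalise (root_act M w (basis_vec i))"
    using assms unfolding normalised_roots_def by blast
  have b: "is_root_multiple M (root_act M w (basis_vec i))"
    unfolding is_root_multiple_def by (rule exI[of _ 1]) (auto simp: scale_vec_def)
  have s: "coord_sum (root_act M w (basis_vec i)) \<noteq> 0" by (rule coord_sum_root_multiple[OF b])
  show "is_root_multiple M r" unfolding r normalise_def using b s by (intro is_root_multiple_scale_vec) auto
  show "\<forall>k. 0 \<le> r k" unfolding r using normalise_nonneg is_root_multiple_sign[OF b] by blast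
  show "coord_sum r = 1" unfolding r by (rule coord_sum_normalise[OF s])
qed

lemma normalise_normalised_root: "r \<in> normalised_roots M \<Longrightarrow> normalise r = r"
  using normalised_rootsD(3)[of r] by (simp add: normalise_apply fun_eq_iff)

lemma normalise_root_act_rev:
  assumes "r \<in> normalised_roots M"
  shows "normalise (root_act M (rev w) (normalise (root_act M w r))) = r"
proof -
  have "coord_sum (root_act M w r) \<noteq> 0"
    using normalised_rootsD(1)[OF assms] by (intro coord_sum_root_multiple is_root_multiple_root_act)
  then show ?thesis
    unfolding normalise_def[of "root_act M w r"] root_act_scale_vec
      root_act_rev_cancel[of M, OF egcm_diag[OF eg]]
    by (simp add: normalise_scale_vec normalise_normalised_root[OF assms])
qed

lemma basis_vec_mem_normalised_roots: "basis_vec i \<in> normalised_roots M"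
proof -
  have "coord_sum (basis_vec i) = 1" by (simp add: coord_sum_def basis_vec_def)
  then have "normalise (root_act M [] (basis_vec i)) = basis_vec i"
    by (simp add: normalise_def scale_vec_def)
  then show ?thesis unfolding normalised_roots_def by (metis (mono_tags, lifting) mem_Collect_eq)
qed

lemma normalised_root_pos_coord:
  assumes "r \<in> normalised_roots M" "r \<noteq> basis_vec i"
  obtains k where "k \<noteq> i" "0 < r k"
proof -
  have "\<exists>k. k \<noteq> i \<and> 0 < r k"
  proof (rule ccontr)
  assume "\<nexists>k. k \<noteq> i \<and> 0 < r k"
  then have "r k = 0" if "k \<noteq> i" for k
    using that normalised_rootsD(2)[OF assms(1)] by (meson antisym not_less)
  then have "coord_sum r = r i" unfolding coord_sum_def by (subst sum.remove[of UNIV i]) auto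
  then have "r = basis_vec i"
    using \<open>\<And>k. k \<noteq> i \<Longrightarrow> r k = 0\<close> normalised_rootsD(3)[OF assms(1)]
    by (auto simp: basis_vec_def fun_eq_iff)
  then show False using assms(2) by simp
  qed
  then show thesis using that by blast
qed

lemma root_refl_normalised_root:
  assumes "r \<in> normalised_roots M" "r \<noteq> basis_vec i"
  shows "normalise (root_refl M i r) \<in> normalised_roots M" "0 < coord_sum (root_refl M i r)"
proof -
  obtain k where "k \<noteq> i" "0 < r k" using normalised_root_pos_coord[OF assms] .
  then have k: "0 < root_refl M i r k" by (simp add: root_refl_def)
  have s: "is_root_multiple M (root_refl M i r)"
    using is_root_multiple_root_act[OF normalised_rootsD(1)[OF assms(1)], of "[i]"] by simp
  show "normalise (root_refl M i r) \<in> normalised_roots M" by (rule normalise_mem_normalised_roots[OF s])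
  show "0 < coord_sum (root_refl M i r)" using is_root_multiple_pos(2)[OF s k] .
qed

lemma normalise_root_refl_mem_inversion_set:
  assumes "r \<in> normalised_roots M" "r \<noteq> basis_vec i"
  shows "normalise (root_refl M i r) \<in> inversion_set M v \<longleftrightarrow> r \<in> inversion_set M (v @ [i])"
proof -
  have "root_act M v (normalise (root_refl M i r)) l
      = root_act M (v @ [i]) r l / coord_sum (root_refl M i r)" for l
    unfolding normalise_def root_act_scale_vec by (simp add: root_act_append scale_vec_def)
  then show ?thesis
    using root_refl_normalised_root[OF assms] assms(1) unfolding inversion_set_def
    by (simp add: divide_le_0_iff not_le[symmetric])
qed

lemma finite_inversion_set: "finite (inversion_set M v)"
proof (induction v rule: rev_induct)
  case Nil
  have "False" if "r \<in> inversion_set M []" for r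
  proof -
    have "\<forall>k. r k = 0"
      using that normalised_rootsD(2)[of r] unfolding inversion_set_def by (auto intro: antisym)
    then show False using normalised_rootsD(3)[of r] that unfolding inversion_set_def coord_sum_def by simp
  qed
  then have "inversion_set M [] = {}" by blast
  then show ?case by simp
next
  case (snoc i v)
  have "inversion_set M (v @ [i])
      \<subseteq> insert (basis_vec i) ((\<lambda>r. normalise (root_refl M i r)) ` inversion_set M v)"
  proof
    fix r assume r: "r \<in> inversion_set M (v @ [i])"
    show "r \<in> insert (basis_vec i) ((\<lambda>r. normalise (root_refl M i r)) ` inversion_set M v)"
    proof (cases "r = basis_vec i")
      case False
      have rR: "r \<in> normalised_roots M" using r unfolding inversion_set_def by simp
      have "r = normalise (root_refl M i (normalise (root_refl M i r)))"
        using normalise_root_act_rev[OF rR, of "[i]"] by simp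
      moreover have "normalise (root_refl M i r) \<in> inversion_set M v"
        using normalise_root_refl_mem_inversion_set[OF rR False] r by simp
      ultimately show ?thesis by blast
    qed simp
  qed
  then show ?case using snoc finite_subset by blast
qed

lemma normalise_root_refl_basis_vec: "normalise (root_refl M i (basis_vec i)) = basis_vec i"
  using normalise_normalised_root[OF basis_vec_mem_normalised_roots]
  by (simp add: root_refl_basis_vec_self[OF egcm_diag[OF eg]] normalise_scale_vec)

lemma basis_vec_mem_inversion_set_iff:
  assumes "cox_length M w < cox_length M (w @ [i])"
  shows "basis_vec i \<notin> inversion_set M w" "basis_vec i \<in> inversion_set M (w @ [i])"
proof -
  have pos: "\<forall>k. 0 \<le> root_act M w (basis_vec i) k"
    using root_act_basis_vec_nonneg[OF eg assms] by blast
  obtain k where "root_act M w (basis_vec i) k \<noteq> 0" using root_nonzero by blast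
  then show "basis_vec i \<notin> inversion_set M w"
    using pos unfolding inversion_set_def by (auto intro: antisym)
  have "root_act M (w @ [i]) (basis_vec i) = scale_vec (-1) (root_act M w (basis_vec i))"
    by (simp add: root_act_append root_refl_basis_vec_self[OF egcm_diag[OF eg]] root_act_scale_vec)
  then show "basis_vec i \<in> inversion_set M (w @ [i])"
    using pos basis_vec_mem_normalised_roots unfolding inversion_set_def by (simp add: scale_vec_def)
qed

section \<open>Finiteness of the root system\<close>

text \<open>Appending \<open>s\<^sub>i\<close> to a reduced word maps the inversion set injectively into the new one
  by \<open>r \<mapsto> s\<^sub>i r\<close> and adds \<open>\<alpha>\<^sub>i\<close>, which is not in the old one by positivity of \<open>w \<alpha>\<^sub>i\<close>.\<close>

lemma length_le_card_inversion_set: "reduced M w \<Longrightarrow> length w \<le> card (inversion_set M w)"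
proof (induction w rule: rev_induct)
  case (snoc i w)
  have IH: "length w \<le> card (inversion_set M w)"
    and longer: "cox_length M w < cox_length M (w @ [i])"
    using snoc.IH reduced_snocD[OF snoc.prems] by blast+
  note basis = basis_vec_mem_inversion_set_iff[OF longer]
  define f where "f = (\<lambda>r. normalise (root_refl M i r))"
  have f_inv: "f (f r) = r" if "r \<in> normalised_roots M" for r
    using normalise_root_act_rev[OF that, of "[i]"] unfolding f_def by simp
  have "root_act M (w @ [i] @ [i]) r = root_act M w r" for r
    by (simp add: root_act_append root_refl_involutive[OF egcm_diag[OF eg]])
  then have f_in: "f r \<in> inversion_set M (w @ [i])" if "r \<in> inversion_set M w" for r
    using that basis(1) normalise_root_refl_mem_inversion_set[ of r i "w @ [i]"]
    unfolding f_def inversion_set_def by auto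
  have "basis_vec i \<notin> f ` inversion_set M w"
  proof
    assume "basis_vec i \<in> f ` inversion_set M w"
    then obtain r where "r \<in> inversion_set M w" "f r = basis_vec i" by auto
    moreover have "f (basis_vec i) = basis_vec i"
      unfolding f_def by (rule normalise_root_refl_basis_vec)
    ultimately show False using basis(1) f_inv unfolding inversion_set_def by force
  qed
  moreover have "inj_on f (inversion_set M w)"
    by (rule inj_on_inverseI[where g = f]) (use f_inv in \<open>auto simp: inversion_set_def\<close>)
  ultimately have "card (insert (basis_vec i) (f ` inversion_set M w)) = Suc (card (inversion_set M w))"
    using finite_inversion_set card_image by simp
  moreover have "card (insert (basis_vec i) (f ` inversion_set M w)) \<le> card (inversion_set M (w @ [i]))"
    using basis(2) f_in finite_inversion_set by (intro card_mono) auto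
  ultimately show ?case using IH by simp
qed simp

lemma finite_cox_quotient:
  assumes "finite (normalised_roots M)"
  shows "finite (UNIV // {(u, v). cox_eq M u v})"
proof -
  let ?r = "{(u, v). cox_eq M u v}"
  let ?short = "{v :: 'i list. set v \<subseteq> UNIV \<and> length v \<le> card (normalised_roots M)}"
  have "UNIV // ?r \<subseteq> (\<lambda>v. ?r `` {v}) ` ?short"
  proof
    fix C assume "C \<in> UNIV // ?r"
    then obtain x where C: "C = ?r `` {x}" unfolding quotient_def by blast
    obtain v where v: "cox_eq M x v" "length v = cox_length M x" using cox_length_witness by blast
    have "reduced M v" unfolding reduced_def using cox_length_cong[OF v(1)] v(2) by simp
    then have "length v \<le> card (inversion_set M v)" by (rule length_le_card_inversion_set)
    also have "\<dots> \<le> card (normalised_roots M)"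
      using assms by (intro card_mono) (auto simp: inversion_set_def)
    finally have "v \<in> ?short" by simp
    moreover have "?r `` {x} = ?r `` {v}" using v(1) by (auto intro: cox_eq.trans cox_eq.sym)
    ultimately show "C \<in> (\<lambda>v. ?r `` {v}) ` ?short" using C by blast
  qed
  moreover have "finite ?short" by (rule finite_lists_length_le) simp
  ultimately show ?thesis using finite_subset by blast
qed

lemma inversion_set_word_act:
  assumes "mu \<in> fund_chamber"
  shows "{r \<in> normalised_roots M. pairing (word_act M w mu) r < 0} \<subseteq> inversion_set M (rev w)"
proof
  fix r assume "r \<in> {r \<in> normalised_roots M. pairing (word_act M w mu) r < 0}"
  then have r: "r \<in> normalised_roots M" and neg: "pairing mu (root_act M (rev w) r) < 0"
    by (auto simp: pairing_word_act)
  have "is_root_multiple M (root_act M (rev w) r)"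
    using normalised_rootsD(1)[OF r] is_root_multiple_root_act by blast
  then consider "\<forall>k. 0 \<le> root_act M (rev w) r k" | "\<forall>k. root_act M (rev w) r k \<le> 0"
    using is_root_multiple_sign by blast
  then have "\<forall>k. root_act M (rev w) r k \<le> 0"
  proof cases
    assume "\<forall>k. 0 \<le> root_act M (rev w) r k"
    then have "0 \<le> pairing mu (root_act M (rev w) r)"
      using assms unfolding pairing_def fund_chamber_def by (intro sum_nonneg) auto
    then show ?thesis using neg by simp
  qed simp
  then show "r \<in> inversion_set M (rev w)" using r unfolding inversion_set_def by simp
qed

text \<open>A positive root \<open>r\<close> with \<open>r\<^sub>k = 0 < r\<^sub>k\<^sub>'\<close> for a neighbour \<open>k'\<close> of \<open>k\<close> has
  \<open>(s\<^sub>k r)\<^sub>k > 0\<close>, since off-diagonal entries of \<open>M\<close> are nonpositive.\<close>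

lemma finite_roots_supported_at_adjacent:
  assumes "finite (roots_supported_at M k)" "egcm_adjacent M k k'"
  shows "finite (roots_supported_at M k')"
proof -
  let ?S = "roots_supported_at M k"
  have "roots_supported_at M k' \<subseteq> ?S \<union> (\<lambda>r. normalise (root_refl M k r)) ` ?S"
  proof
    fix r assume r: "r \<in> roots_supported_at M k'"
    show "r \<in> ?S \<union> (\<lambda>r. normalise (root_refl M k r)) ` ?S"
    proof (cases "r \<in> ?S")
      case False
      have rR: "r \<in> normalised_roots M" and rk': "0 < r k'" using r unfolding roots_supported_at_def by auto
      have nonneg: "\<forall>l. 0 \<le> r l" using normalised_rootsD(2)[OF rR] .
      have "\<not> 0 < r k" using False rR unfolding roots_supported_at_def by simp
      then have rk: "r k = 0" using nonneg[rule_format, of k] by linarith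
      have kk': "k \<noteq> k'" "M k k' < 0"
        using assms(2) egcm_nonpos[OF eg, of k k'] unfolding egcm_adjacent_def by auto
      have "M k l * r l \<le> 0" if "l \<in> UNIV - {k'}" for l
      proof (cases "l = k")
        case False
        then show ?thesis using nonneg egcm_nonpos[OF eg, of k l] by (simp add: mult_nonpos_nonneg)
      qed (simp add: rk)
      then have "(\<Sum>l\<in>UNIV - {k'}. M k l * r l) \<le> 0" by (rule sum_nonpos)
      moreover have "pairing (M k) r = M k k' * r k' + (\<Sum>l\<in>UNIV - {k'}. M k l * r l)"
        unfolding pairing_def by (rule sum.remove) auto
      ultimately have "pairing (M k) r \<le> M k k' * r k'" by simp
      also have "\<dots> < 0" using kk' rk' by (simp add: mult_neg_pos)
      finally have "0 < root_refl M k r k" using rk by (simp add: root_refl_def)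
      moreover have "is_root_multiple M (root_refl M k r)"
        using is_root_multiple_root_act[OF normalised_rootsD(1)[OF rR], of "[k]"] by simp
      ultimately have "normalise (root_refl M k r) \<in> ?S"
        using normalise_mem_normalised_roots is_root_multiple_pos(2)
        unfolding roots_supported_at_def by (simp add: normalise_apply)
      moreover have "r = normalise (root_refl M k (normalise (root_refl M k r)))"
        using normalise_root_act_rev[OF rR, of "[k]"] by simp
      ultimately show ?thesis by blast
    qed simp
  qed
  then show ?thesis using assms(1) finite_subset by blast
qed

lemma finite_normalised_roots:
  assumes "egcm_connected M" "finite (roots_supported_at M s)"
  shows "finite (normalised_roots M)"
proof -
  have "finite (roots_supported_at M k)" for k
  proof -
    have "(s, k) \<in> {(a, b). egcm_adjacent M a b}\<^sup>*" using assms(1) unfolding egcm_connected_def by blast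
    then show ?thesis
    proof (induction rule: rtrancl_induct)
      case (step k k')
      then show ?case using finite_roots_supported_at_adjacent by blast
    qed (rule assms(2))
  qed
  moreover have "normalised_roots M \<subseteq> (\<Union>k. roots_supported_at M k)"
  proof
    fix r assume r: "r \<in> normalised_roots M"
    have "\<exists>k. 0 < r k"
    proof (rule ccontr)
      assume "\<nexists>k. 0 < r k"
      then have "coord_sum r \<le> 0" unfolding coord_sum_def by (simp add: sum_nonpos not_less)
      then show False using normalised_rootsD(3)[OF r] by simp
    qed
    then show "r \<in> (\<Union>k. roots_supported_at M k)" using r unfolding roots_supported_at_def by blast
  qed
  ultimately show ?thesis by (simp add: finite_subset)
qed

lemma finite_roots_not_orthogonal:
  assumes "lam \<in> tits_cone M" "(\<lambda>j. - lam j) \<in> tits_cone M"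
  shows "finite {r \<in> normalised_roots M. pairing lam r \<noteq> 0}"
proof -
  obtain w mu where mu: "mu \<in> fund_chamber" "lam = word_act M w mu"
    using assms(1) unfolding tits_cone_def by blast
  obtain w' mu' where mu': "mu' \<in> fund_chamber" "(\<lambda>j. - lam j) = word_act M w' mu'"
    using assms(2) unfolding tits_cone_def by blast
  have "{r \<in> normalised_roots M. pairing lam r \<noteq> 0}
      \<subseteq> {r \<in> normalised_roots M. pairing lam r < 0} \<union> {r \<in> normalised_roots M. pairing (\<lambda>j. - lam j) r < 0}"
    by (auto simp: pairing_uminus_left)
  also have "\<dots> \<subseteq> inversion_set M (rev w) \<union> inversion_set M (rev w')"
    using inversion_set_word_act[OF mu(1), of w] inversion_set_word_act[OF mu'(1), of w']
    unfolding mu(2)[symmetric] mu'(2)[symmetric] by (rule Un_mono)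
  finally have "{r \<in> normalised_roots M. pairing lam r \<noteq> 0} \<subseteq> inversion_set M (rev w) \<union> inversion_set M (rev w')" .
  then show ?thesis using finite_inversion_set finite_subset by blast
qed

lemma finite_roots_supported_at_chamber:
  assumes "finite {r \<in> normalised_roots M. pairing (word_act M w mu) r \<noteq> 0}"
    and "mu \<in> fund_chamber" "0 < mu s"
  shows "finite (roots_supported_at M s)"
proof -
  define g where "g = (\<lambda>r. normalise (root_act M w r))"
  have "g r \<in> {r \<in> normalised_roots M. pairing (word_act M w mu) r \<noteq> 0}"
    if r: "r \<in> roots_supported_at M s" for r
  proof -
    have rR: "r \<in> normalised_roots M" and rs: "0 < r s" using r unfolding roots_supported_at_def by auto
    have root: "is_root_multiple M (root_act M w r)"
      using is_root_multiple_root_act[OF normalised_rootsD(1)[OF rR]] .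
    have "0 < pairing mu r"
      unfolding pairing_def using normalised_rootsD(2)[OF rR] assms(2,3) rs
      by (intro sum_pos2[of UNIV s]) (auto simp: fund_chamber_def)
    moreover have "pairing (word_act M w mu) (g r) = (1 / coord_sum (root_act M w r)) * pairing mu r"
      unfolding g_def normalise_def pairing_scale_vec pairing_word_act
        root_act_rev_cancel[of M, OF egcm_diag[OF eg]] ..
    ultimately show ?thesis
      using coord_sum_root_multiple[OF root] normalise_mem_normalised_roots[OF root]
      unfolding g_def by simp
  qed
  moreover have "inj_on g (roots_supported_at M s)"
    by (rule inj_on_inverseI[where g = "\<lambda>y. normalise (root_act M (rev w) y)"])
      (use normalise_root_act_rev in \<open>auto simp: g_def roots_supported_at_def\<close>)
  ultimately show ?thesis
    using assms(1) finite_subset[of "g ` roots_supported_at M s"] finite_imageD by blast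
qed

end

theorem proposition4p11:
  fixes M :: "'i::finite \<Rightarrow> 'i \<Rightarrow> real"
  assumes "egcm M"
    and "egcm_connected M"
    and "unital_OA_cyclic M"
    and "coxeter_group_infinite M"
  shows "tits_cone M \<inter> (\<lambda>l. (\<lambda>j. - l j)) ` tits_cone M = {(\<lambda>j. 0)}"
proof -
  have zero: "(\<lambda>j. 0) \<in> tits_cone M"
    unfolding tits_cone_def fund_chamber_def by (rule UN_I[of "[]"]) auto
  have trivial: "lam = (\<lambda>j. 0)" if lam: "lam \<in> tits_cone M" "(\<lambda>j. - lam j) \<in> tits_cone M" for lam
  proof (rule ccontr)
    assume "lam \<noteq> (\<lambda>j. 0)"
    obtain w mu where mu: "mu \<in> fund_chamber" "lam = word_act M w mu"
      using lam(1) unfolding tits_cone_def by blast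
    have "mu \<noteq> (\<lambda>j. 0)" using \<open>lam \<noteq> (\<lambda>j. 0)\<close> mu(2) word_act_zero by auto
    then obtain s where "mu s \<noteq> 0" by (meson ext)
    then have s: "0 < mu s" using mu(1) unfolding fund_chamber_def by (simp add: order_less_le)
    have "finite (roots_supported_at M s)"
      using finite_roots_supported_at_chamber[OF assms(1) _ mu(1) s]
        finite_roots_not_orthogonal[OF assms(1) lam] mu(2) by simp
    then have "finite (normalised_roots M)" by (rule finite_normalised_roots[OF assms(1,2)])
    then show False
      using finite_cox_quotient[OF assms(1)] assms(4) unfolding coxeter_group_infinite_def by blast
  qed
  have "(\<lambda>j. 0) \<in> (\<lambda>l. (\<lambda>j. - l j)) ` tits_cone M"
    using zero by (intro image_eqI[of _ _ "\<lambda>j. 0"]) auto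
  moreover have "x = (\<lambda>j. 0)" if "x \<in> tits_cone M" "l \<in> tits_cone M" "x = (\<lambda>j. - l j)" for x l
    using trivial[of x] that by simp
  ultimately show ?thesis using zero by blast
qed

end
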